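(* Let $\mathcal G$ be a Lie superalgebra over a field of characteristic zero, let $\mathcal S$ be the space of symmetric operators on $\mathcal G$ and $[\cdot,\cdot]$ the extended bracket described below, and let $1$ denote the identity map of $\mathcal G$. If $A\in\mathcal S$, then for every integer $k\ge1$ the element $[A,k]=[\cdots[[A,1],1],\ldots,1]$ (with $1$ appearing $k$ times) also lies in $\mathcal S$.
   Context: Set $\mathcal U_1=\mathcal G$ with its $\mathbb Z_2$-grading. For $p\ge1$ define recursively $\mathcal U_{-p+1}=\mathrm{Hom}(\mathcal U_1,\mathcal U_{-p+2})$, $\mathbb Z_2$-graded by declaring $A$ even (resp. odd) if it preserves (resp. reverses) parity; $|u|$ is the parity of a homogeneous element. Elements of $\mathcal U_{1-p}$ are operators of order $p$ (elements of $\mathcal G$ have order $0$), identified for $p\ge1$ with $p$-linear maps $A(x_1,\dots,x_p)=A(x_1)\cdots(x_p)$; $\mathcal U_{1-}=\bigoplus_{p\ge0}\mathcal U_{1-p}$. The identity map $1$ is an even operator of order $1$. An operator of order $p\ge2$ is symmetric if $A(\dots,x_i,x_{i+1},\dots)=(-1)^{|x_i||x_{i+1}|}A(\dots,x_{i+1},x_i,\dots)$ for all homogeneous arguments and all $i$; operators of order $0$ or $1$ are symmetric; $\mathcal S$ is the span of symmetric operators. Define $\circ$: $A\circ y=A(y)$, $y\circ A=0$ for $A$ of order $\ge1$, $y\in\mathcal U_1$; for $A,B$ of orders $\ge1$, recursively $(A\circ B)(x)=A\circ B(x)+(-1)^{|B||x|}A(x)\circ B$. Define $\bullet$: $A_p\bullet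 B_q=\frac{p!q!}{(p+q-1)!}A_p\circ B_q$ for orders $p,q\ge1$; $A_p\bullet x=pA_p(x)$, $x\bullet A_p=0$, $x\bullet y=0$ for $x,y\in\mathcal U_1$. The bracket of $\mathcal G$ extends to $\mathcal U_{1-}$: on $\mathcal G$ it is the given bracket, and for operators $A,B$ of orders $p,q$ with $p+q\ge1$, $[A,B]$ is the operator of order $p+q$ defined recursively by $[A,B]\bullet x=[A,B\bullet x]+(-1)^{|x||B|}[A\bullet x,B]$ for all $x\in\mathcal G$. *)

theory Defs
  imports Main "HOL.Vector_Spaces"
begin

text \<open>Parity of homogeneous elements is encoded as bool: False = even, True = odd;
  addition of parities is exclusive or, i.e. (\<noteq>).\<close>

definition sgnsc :: "bool \<Rightarrow> 'v::ab_group_add \<Rightarrow> 'v" where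
  "sgnsc b v = (if b then - v else v)"

definition xorl :: "bool list \<Rightarrow> bool" where
  "xorl es = foldr (\<noteq>) es False"

locale lie_superalgebra = vector_space scale
  for scale :: "'k::field_char_0 \<Rightarrow> 'v::ab_group_add \<Rightarrow> 'v" +
  fixes Ev Od :: "'v set"
    and lb :: "'v \<Rightarrow> 'v \<Rightarrow> 'v"
  assumes sub_Ev: "subspace Ev" and sub_Od: "subspace Od"
    and dsum: "\<And>v. \<exists>a b. a \<in> Ev \<and> b \<in> Od \<and> v = a + b"
    and dsum0: "Ev \<inter> Od = {0}"
    and lb_add_left: "\<And>x y z. lb (x + y) z = lb x z + lb y z"
    and lb_add_right: "\<And>x y z. lb x (y + z) = lb x y + lb x z"
    and lb_scale_left: "\<And>c x y. lb (scale c x) y = scale c (lb x y)"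
    and lb_scale_right: "\<And>c x y. lb x (scale c y) = scale c (lb x y)"
    and lb_graded: "\<And>x y e d. x \<in> (if e then Od else Ev) \<Longrightarrow> y \<in> (if d then Od else Ev)
        \<Longrightarrow> lb x y \<in> (if e \<noteq> d then Od else Ev)"
    and lb_antisym: "\<And>x y e d. x \<in> (if e then Od else Ev) \<Longrightarrow> y \<in> (if d then Od else Ev)
        \<Longrightarrow> lb x y = - sgnsc (e \<and> d) (lb y x)"
    and lb_jacobi: "\<And>x y z e d. x \<in> (if e then Od else Ev) \<Longrightarrow> y \<in> (if d then Od else Ev)
        \<Longrightarrow> lb x (lb y z) = lb (lb x y) z + sgnsc (e \<and> d) (lb y (lb x z))"
begin

definition par :: "bool \<Rightarrow> 'v set" where
  "par e = (if e then Od else Ev)"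

definition proj :: "bool \<Rightarrow> 'v \<Rightarrow> 'v" where
  "proj e v = (THE a. a \<in> par e \<and> v - a \<in> par (\<not> e))"

text \<open>Operators: an operator of order p is a p-linear map, represented as a function
  on lists of arguments, A(x1,...,xp) = A [x1,...,xp], which vanishes on lists of
  other lengths. Partial application A(x) is \<open>\<lambda>ys. A (x # ys)\<close>.
  An element of U_{1-} (finite sum of operators of various orders) is represented as
  one function whose restriction to lists of length p is its order-p component.\<close>

definition is_op :: "nat \<Rightarrow> ('v list \<Rightarrow> 'v) \<Rightarrow> bool" where
  "is_op p A \<longleftrightarrow> (\<forall>xs. length xs \<noteq> p \<longrightarrow> A xs = 0) \<and>
     (\<forall>ys zs x y. length ys + length zs + 1 = p \<longrightarrow>
         A (ys @ (x + y) # zs) = A (ys @ x # zs) + A (ys @ y # zs)) \<and>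
     (\<forall>ys zs x c. length ys + length zs + 1 = p \<longrightarrow>
         A (ys @ scale c x # zs) = scale c (A (ys @ x # zs)))"

text \<open>Parity-d component of an operator (even part preserves, odd part reverses parity).\<close>
definition opcomp :: "bool \<Rightarrow> ('v list \<Rightarrow> 'v) \<Rightarrow> 'v list \<Rightarrow> 'v" where
  "opcomp d B xs = (\<Sum>es\<in>{es. length es = length xs}.
      proj (d \<noteq> xorl es) (B (map2 proj es xs)))"

definition symmetric :: "nat \<Rightarrow> ('v list \<Rightarrow> 'v) \<Rightarrow> bool" where
  "symmetric p A \<longleftrightarrow> (\<forall>ys zs x y e d. length ys + length zs + 2 = p \<longrightarrow>
      x \<in> par e \<longrightarrow> y \<in> par d \<longrightarrow>
      A (ys @ x # y # zs) = sgnsc (e \<and> d) (A (ys @ y # x # zs)))"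

inductive_set Sspan :: "('v list \<Rightarrow> 'v) set" where
  zero: "(\<lambda>_. 0) \<in> Sspan"
| sym: "is_op p A \<Longrightarrow> symmetric p A \<Longrightarrow> A \<in> Sspan"
| add: "A \<in> Sspan \<Longrightarrow> B \<in> Sspan \<Longrightarrow> (\<lambda>xs. A xs + B xs) \<in> Sspan"
| smult: "A \<in> Sspan \<Longrightarrow> (\<lambda>xs. scale c (A xs)) \<in> Sspan"

text \<open>The extended bracket [A,B] of an operator A of order p and B of order q,
  as an operator of order p+q.  For p+q \<ge> 1 it is determined by
  [A,B]\<bullet>x = (p+q)[A,B](x) = [A,B\<bullet>x] + (-1)^{|x||B|}[A\<bullet>x,B], with
  A\<bullet>x = p A(x) (zero if p = 0), extended linearly in x and B via the
  parity decompositions.\<close>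
fun ebr :: "nat \<Rightarrow> nat \<Rightarrow> ('v list \<Rightarrow> 'v) \<Rightarrow> ('v list \<Rightarrow> 'v) \<Rightarrow> 'v list \<Rightarrow> 'v" where
  "ebr p q A B [] = (if p + q = 0 then lb (A []) (B []) else 0)"
| "ebr p q A B (x # ys) =
     (if p + q \<noteq> Suc (length ys) then 0 else
      scale (1 / of_nat (p + q))
       ((if q = 0 then 0 else
           ebr p (q - 1) A (\<lambda>zs. scale (of_nat q) (B (x # zs))) ys)
        + (if p = 0 then 0 else
           ebr (p - 1) q (\<lambda>zs. scale (of_nat p) (A (proj False x # zs))) (opcomp False B) ys
         + ebr (p - 1) q (\<lambda>zs. scale (of_nat p) (A (proj False x # zs))) (opcomp True B) ys
         + ebr (p - 1) q (\<lambda>zs. scale (of_nat p) (A (proj True x # zs))) (opcomp False B) ys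
         - ebr (p - 1) q (\<lambda>zs. scale (of_nat p) (A (proj True x # zs))) (opcomp True B) ys)))"

definition comp :: "nat \<Rightarrow> ('v list \<Rightarrow> 'v) \<Rightarrow> 'v list \<Rightarrow> 'v" where
  "comp p F xs = (if length xs = p then F xs else 0)"

definition ubr :: "('v list \<Rightarrow> 'v) \<Rightarrow> ('v list \<Rightarrow> 'v) \<Rightarrow> 'v list \<Rightarrow> 'v" where
  "ubr F G xs = (\<Sum>p\<le>length xs. ebr p (length xs - p) (comp p F) (comp (length xs - p) G) xs)"

definition one :: "'v list \<Rightarrow> 'v" where
  "one xs = (case xs of [x] \<Rightarrow> x | _ \<Rightarrow> 0)"

definition iter_one :: "('v list \<Rightarrow> 'v) \<Rightarrow> nat \<Rightarrow> 'v list \<Rightarrow> 'v" where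
  "iter_one A k = ((\<lambda>F. ubr F one) ^^ k) A"

end

end

theory Submission
  imports Defs
begin

text \<open>Since \<open>1\<close> is even of order one, the defining recursion of the bracket reads
  \<open>(p+1)[A,1](x,\<dots>) = [A,x](\<dots>) + p[A(x),1](\<dots>)\<close> for \<open>A\<close> of order \<open>p\<close>, where
  \<open>[A,x](y\<^sub>1,\<dots>,y\<^sub>p) = \<plusminus>[A(y\<^sub>1,\<dots>,y\<^sub>p),x]\<close> carries the Koszul sign of moving \<open>x\<close>
  past the \<open>y\<^sub>i\<close>. Unrolling twice writes \<open>(p+1)[A,1](x,y,\<dots>)\<close> as
  \<open>[A,x](y,\<dots>) + [A(x),y](\<dots>) + (p-1)[A(x,y),1](\<dots>)\<close>. Swapping \<open>x\<close> and \<open>y\<close> interchanges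
  the first two terms up to exactly the Koszul sign \<open>(-1)\<^bsup>|x||y|\<^esup>\<close>, and symmetry of \<open>A\<close>
  handles the last one. Transpositions further to the right follow by induction on the order,
  applied to the symmetric operators \<open>A(w)\<close> and \<open>[A,w]\<close>; multilinearity is proved the same way.
  As \<open>F \<mapsto> [F,1]\<close> is linear, the span \<open>\<S>\<close> is preserved.\<close>

context lie_superalgebra
begin

section \<open>Parity projections and signs\<close>

lemma subspace_par: "subspace (par e)"
  by (simp add: par_def sub_Ev sub_Od)

lemma par_inter_zero: "x \<in> par e \<Longrightarrow> x \<in> par (\<not> e) \<Longrightarrow> x = 0"
  using dsum0 by (cases e) (auto simp: par_def)

lemma par_decomp_unique:
  assumes "a \<in> par e" "v - a \<in> par (\<not> e)" "a' \<in> par e" "v - a' \<in> par (\<not> e)"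
  shows "a = a'"
proof -
  have "a - a' \<in> par e" "(v - a') - (v - a) \<in> par (\<not> e)"
    using assms subspace_diff[OF subspace_par] by blast+
  moreover have "(v - a') - (v - a) = a - a'" by (simp add: algebra_simps)
  ultimately show ?thesis using par_inter_zero by fastforce
qed

lemma proj_spec: "proj e v \<in> par e \<and> v - proj e v \<in> par (\<not> e)"
proof -
  obtain a b where ab: "a \<in> Ev" "b \<in> Od" "v = a + b" using dsum by blast
  have "\<exists>a. a \<in> par e \<and> v - a \<in> par (\<not> e)"
  proof (cases e)
    case True
    then show ?thesis using ab by (intro exI[of _ b]) (auto simp: par_def)
  next
    case False
    then show ?thesis using ab by (intro exI[of _ a]) (auto simp: par_def)
  qed
  then have "\<exists>!a. a \<in> par e \<and> v - a \<in> par (\<not> e)"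
    using par_decomp_unique by blast
  then show ?thesis unfolding proj_def by (rule theI')
qed

lemma proj_eqI: "a \<in> par e \<Longrightarrow> v - a \<in> par (\<not> e) \<Longrightarrow> proj e v = a"
  using proj_spec par_decomp_unique by blast

lemma proj_of_par: "v \<in> par e \<Longrightarrow> proj e v = v"
  by (rule proj_eqI) (auto simp: subspace_0[OF subspace_par])

lemma proj_of_par_other: "v \<in> par (\<not> e) \<Longrightarrow> proj e v = 0"
  by (rule proj_eqI) (auto simp: subspace_0[OF subspace_par])

lemma proj_False_add_proj_True: "proj False v + proj True v = v"
proof -
  have "proj True v = v - proj False v"
    using proj_spec[of False v] by (intro proj_eqI) auto
  then show ?thesis by simp
qed

lemma proj_add: "proj e (v + w) = proj e v + proj e w"
proof (rule proj_eqI)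
  have "v + w - (proj e v + proj e w) = (v - proj e v) + (w - proj e w)"
    by (simp add: algebra_simps)
  then show "v + w - (proj e v + proj e w) \<in> par (\<not> e)"
    using proj_spec subspace_add[OF subspace_par] by metis
qed (use proj_spec subspace_add[OF subspace_par] in blast)

lemma proj_scale: "proj e (scale c v) = scale c (proj e v)"
proof (rule proj_eqI)
  have "scale c v - scale c (proj e v) = scale c (v - proj e v)"
    by (simp add: scale_right_diff_distrib)
  then show "scale c v - scale c (proj e v) \<in> par (\<not> e)"
    using proj_spec subspace_scale[OF subspace_par] by metis
qed (use proj_spec subspace_scale[OF subspace_par] in blast)

lemma proj_zero [simp]: "proj e 0 = 0"
  by (rule proj_of_par) (rule subspace_0[OF subspace_par])

lemma proj_proj [simp]: "proj e (proj e v) = proj e v"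
  using proj_of_par proj_spec by blast

lemma proj_proj_other [simp]: "e \<noteq> d \<Longrightarrow> proj e (proj d v) = 0"
  using proj_of_par_other[of "proj d v" e] proj_spec[of d v] by (cases e) auto

lemma lb_zero [simp]: "lb 0 y = 0" "lb x 0 = 0"
  using lb_scale_left[of 0 0 y] lb_scale_right[of x 0 0] by simp_all

lemma lb_diff_left: "lb (x - y) z = lb x z - lb y z"
  using lb_add_left[of x "- y" z] lb_scale_left[of "-1" y z] by simp

lemma sgnsc_add: "sgnsc b (x + y) = sgnsc b x + sgnsc b y"
  by (simp add: sgnsc_def)

lemma sgnsc_zero [simp]: "sgnsc b 0 = 0"
  by (simp add: sgnsc_def)

lemma sgnsc_scale: "sgnsc b (scale c v) = scale c (sgnsc b v)"
  by (simp add: sgnsc_def)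

lemma lb_sgnsc_left: "lb (sgnsc b x) y = sgnsc b (lb x y)"
  using lb_scale_left[of "-1" x y] by (simp add: sgnsc_def)

definition parity_op :: "'v \<Rightarrow> 'v" where
  "parity_op v = proj False v - proj True v"

lemma parity_op_add: "parity_op (x + y) = parity_op x + parity_op y"
  by (simp add: parity_op_def proj_add algebra_simps)

lemma parity_op_scale: "parity_op (scale c x) = scale c (parity_op x)"
  by (simp add: parity_op_def proj_scale scale_right_diff_distrib)

lemma parity_op_of_par: "v \<in> par e \<Longrightarrow> parity_op v = sgnsc e v"
  using proj_of_par proj_of_par_other[of v "\<not> e"]
  by (cases e) (auto simp: parity_op_def sgnsc_def)

lemma parity_op_in_par: "v \<in> par e \<Longrightarrow> parity_op v \<in> par e"
  by (cases e) (simp_all add: parity_op_of_par sgnsc_def subspace_neg[OF subspace_par])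

section \<open>Operators and the extended bracket\<close>

lemma is_op_eq_0: "is_op p A \<Longrightarrow> length xs \<noteq> p \<Longrightarrow> A xs = 0"
  by (simp add: is_op_def)

lemma is_op_add: "is_op p A \<Longrightarrow> length ys + length zs + 1 = p \<Longrightarrow>
    A (ys @ (x + y) # zs) = A (ys @ x # zs) + A (ys @ y # zs)"
  by (simp add: is_op_def)

lemma is_op_scale: "is_op p A \<Longrightarrow> length ys + length zs + 1 = p \<Longrightarrow>
    A (ys @ scale c x # zs) = scale c (A (ys @ x # zs))"
  by (simp add: is_op_def)

lemma is_op_add_head: "is_op p A \<Longrightarrow> A ((x + y) # zs) = A (x # zs) + A (y # zs)"
  using is_op_add[of p A "[]" zs x y] is_op_eq_0[of p A]
  by (cases "length zs + 1 = p") auto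

lemma is_op_scale_head: "is_op p A \<Longrightarrow> A (scale c x # zs) = scale c (A (x # zs))"
  using is_op_scale[of p A "[]" zs c x] is_op_eq_0[of p A]
  by (cases "length zs + 1 = p") auto

lemma is_op_neg_head: "is_op p A \<Longrightarrow> A (- x # zs) = - A (x # zs)"
  using is_op_scale_head[of p A "-1" x zs] by simp

lemma is_op_sgnsc_head: "is_op p A \<Longrightarrow> A (sgnsc b x # zs) = sgnsc b (A (x # zs))"
  by (simp add: sgnsc_def is_op_neg_head)

lemma is_op_Cons_scale:
  assumes "is_op (Suc n) A"
  shows "is_op n (\<lambda>zs. scale c (A (v # zs)))"
  unfolding is_op_def
proof (intro conjI allI impI)
  fix xs :: "'v list"
  assume "length xs \<noteq> n"
  then show "scale c (A (v # xs)) = 0" using is_op_eq_0[OF assms, of "v # xs"] by simp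
next
  fix ys zs :: "'v list" and x y
  assume "length ys + length zs + 1 = n"
  then show "scale c (A (v # ys @ (x + y) # zs))
      = scale c (A (v # ys @ x # zs)) + scale c (A (v # ys @ y # zs))"
    using is_op_add[OF assms, of "v # ys" zs x y] by (simp add: scale_right_distrib)
next
  fix ys zs :: "'v list" and x d
  assume "length ys + length zs + 1 = n"
  then show "scale c (A (v # ys @ scale d x # zs)) = scale d (scale c (A (v # ys @ x # zs)))"
    using is_op_scale[OF assms, of "v # ys" zs d x] by (simp add: mult.commute)
qed

lemma is_op_Cons: "is_op (Suc n) A \<Longrightarrow> is_op n (\<lambda>zs. A (v # zs))"
  using is_op_Cons_scale[of n A 1 v] by simp

lemma symmetric_Cons: "symmetric (Suc n) A \<Longrightarrow> symmetric n (\<lambda>zs. A (v # zs))"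
  unfolding symmetric_def by (metis Cons_eq_appendI add_Suc length_Cons)

lemma one_singleton [simp]: "one [x] = x"
  by (simp add: one_def)

lemma one_eq_0: "length xs \<noteq> 1 \<Longrightarrow> one xs = 0"
  by (auto simp: one_def split: list.split)

lemma opcomp_Nil: "opcomp d B [] = proj d (B [])"
  by (simp add: opcomp_def xorl_def)

lemma opcomp_zero: "(\<And>xs. B xs = 0) \<Longrightarrow> opcomp d B xs = 0"
  by (simp add: opcomp_def)

lemma opcomp_one: "opcomp False one = one" "opcomp True one = (\<lambda>_. 0)"
proof -
  have off: "opcomp d one xs = 0" if "length xs \<noteq> 1" for d xs
    unfolding opcomp_def using that by (intro sum.neutral) (auto simp: one_eq_0)
  have "{es::bool list. length es = 1} = {[False], [True]}"
    by (auto simp: length_Suc_conv)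
  then have on: "opcomp d one [x] = (if d then 0 else x)" for d x
    unfolding opcomp_def using proj_False_add_proj_True[of x] by (simp add: xorl_def one_def)
  have "opcomp d one xs = (if d then 0 else one xs)" for d xs
    by (cases "length xs = 1") (auto simp: off on one_eq_0 length_Suc_conv)
  then show "opcomp False one = one" "opcomp True one = (\<lambda>_. 0)"
    by (simp_all add: fun_eq_iff)
qed

lemma ebr_eq_0: "length xs \<noteq> p + q \<Longrightarrow> ebr p q A B xs = 0"
  by (cases xs) auto

lemma ebr_zero_right: "(\<And>zs. B zs = 0) \<Longrightarrow> ebr p q A B xs = 0"
proof (induction xs arbitrary: p q A B)
  case (Cons x ys)
  have B_tail: "ebr p' q' A' (\<lambda>zs. scale c (B (x # zs))) ys = 0" for p' q' A' c
    by (rule Cons.IH) (simp add: Cons.prems)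
  have B_parts: "ebr p' q' A' (opcomp d B) ys = 0" for p' q' A' d
    by (rule Cons.IH) (simp add: Cons.prems opcomp_zero)
  show ?case unfolding ebr.simps B_tail B_parts by simp
qed simp

lemma ebr_add_left:
  "(\<And>zs. A'' zs = A zs + A' zs) \<Longrightarrow> ebr p q A'' B xs = ebr p q A B xs + ebr p q A' B xs"
proof (induction xs arbitrary: p q A A' A'' B)
  case (Cons x ys)
  have A_tail: "ebr p' q' A'' B' ys = ebr p' q' A B' ys + ebr p' q' A' B' ys" for p' q' B'
    by (rule Cons.IH) (simp add: Cons.prems)
  have A_head: "ebr p' q' (\<lambda>zs. scale c (A'' (v # zs))) B' ys
      = ebr p' q' (\<lambda>zs. scale c (A (v # zs))) B' ys + ebr p' q' (\<lambda>zs. scale c (A' (v # zs))) B' ys"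
    for p' q' B' c v
    by (rule Cons.IH) (simp add: Cons.prems scale_right_distrib)
  show ?case unfolding ebr.simps A_tail A_head by (simp add: algebra_simps)
qed (simp add: lb_add_left)

lemma ebr_scale_left:
  "(\<And>zs. A' zs = scale c (A zs)) \<Longrightarrow> ebr p q A' B xs = scale c (ebr p q A B xs)"
proof (induction xs arbitrary: p q A A' B)
  case (Cons x ys)
  have A_tail: "ebr p' q' A' B' ys = scale c (ebr p' q' A B' ys)" for p' q' B'
    by (rule Cons.IH) (simp add: Cons.prems)
  have A_head: "ebr p' q' (\<lambda>zs. scale d (A' (v # zs))) B' ys
      = scale c (ebr p' q' (\<lambda>zs. scale d (A (v # zs))) B' ys)" for p' q' B' d v
    by (rule Cons.IH) (simp add: Cons.prems mult.commute)
  show ?case unfolding ebr.simps A_tail A_head by (simp add: algebra_simps)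
qed (simp add: lb_scale_left)

lemma ebr_zero_left: "(\<And>zs. A zs = 0) \<Longrightarrow> ebr p q A B xs = 0"
  using ebr_scale_left[of A 0 A p q B xs] by simp

lemma ebr_sgnsc_left:
  "(\<And>zs. A' zs = sgnsc b (A zs)) \<Longrightarrow> ebr p q A' B xs = sgnsc b (ebr p q A B xs)"
  using ebr_scale_left[of A' "if b then -1 else 1" A p q B xs] by (simp add: sgnsc_def)

declare ebr.simps(2) [simp del]

section \<open>The bracket with the identity\<close>

text \<open>\<open>op_br_vec A x ys\<close> is \<open>[A,x](ys)\<close> for \<open>x \<in> \<G>\<close>; twisting the arguments by
  their parities produces the Koszul sign \<open>(-1)\<^bsup>|x|(|y\<^sub>1|+\<dots>+|y\<^sub>p|)\<^esup>\<close> on the odd part of \<open>x\<close>.\<close>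

definition op_br_vec :: "('v list \<Rightarrow> 'v) \<Rightarrow> 'v \<Rightarrow> 'v list \<Rightarrow> 'v" where
  "op_br_vec A x ys = lb (A ys) (proj False x) + lb (A (map parity_op ys)) (proj True x)"

lemma op_br_vec_of_par:
  "x \<in> par e \<Longrightarrow> op_br_vec A x ys = (if e then lb (A (map parity_op ys)) x else lb (A ys) x)"
  using proj_of_par proj_of_par_other[of x "\<not> e"] by (cases e) (auto simp: op_br_vec_def)

lemma op_br_vec_add: "op_br_vec A (u + v) zs = op_br_vec A u zs + op_br_vec A v zs"
  by (simp add: op_br_vec_def proj_add lb_add_right)

lemma op_br_vec_scale: "op_br_vec A (scale c u) zs = scale c (op_br_vec A u zs)"
  by (simp add: op_br_vec_def proj_scale lb_scale_right scale_right_distrib)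

lemma op_br_vec_add_arg:
  assumes "is_op p A" "length ys + length zs + 1 = p"
  shows "op_br_vec A w (ys @ (u + v) # zs) = op_br_vec A w (ys @ u # zs) + op_br_vec A w (ys @ v # zs)"
  using is_op_add[OF assms]
    is_op_add[OF assms(1), of "map parity_op ys" "map parity_op zs" "parity_op u" "parity_op v"] assms(2)
  by (simp add: op_br_vec_def parity_op_add lb_add_left)

lemma op_br_vec_scale_arg:
  assumes "is_op p A" "length ys + length zs + 1 = p"
  shows "op_br_vec A w (ys @ scale c u # zs) = scale c (op_br_vec A w (ys @ u # zs))"
  using is_op_scale[OF assms, of c u]
    is_op_scale[OF assms(1), of "map parity_op ys" "map parity_op zs" c "parity_op u"] assms(2)
  by (simp add: op_br_vec_def parity_op_scale lb_scale_left scale_right_distrib)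

lemma op_br_vec_swap:
  assumes A: "is_op p A" and x: "x \<in> par e" and y: "y \<in> par d"
  shows "op_br_vec A x (y # zs) + op_br_vec (\<lambda>w. A (x # w)) y zs =
    sgnsc (e \<and> d) (op_br_vec A y (x # zs) + op_br_vec (\<lambda>w. A (y # w)) x zs)"
  using x y parity_op_of_par[OF x] parity_op_of_par[OF y]
  by (cases e; cases d)
    (simp_all add: op_br_vec_of_par is_op_sgnsc_head[OF A] is_op_neg_head[OF A] sgnsc_def
      lb_sgnsc_left[of True, unfolded sgnsc_def, simplified] algebra_simps)

lemma symmetric_op_br_vec:
  assumes "symmetric p A"
  shows "symmetric p (op_br_vec A w)"
  unfolding symmetric_def
proof (intro allI impI)
  fix ys zs :: "'v list" and x y :: 'v and e d :: bool
  assume len: "length ys + length zs + 2 = p" and x: "x \<in> par e" and y: "y \<in> par d"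
  have "A (ys @ x # y # zs) = sgnsc (e \<and> d) (A (ys @ y # x # zs))"
    using assms x y len unfolding symmetric_def by blast
  moreover have "A (map parity_op (ys @ x # y # zs)) = sgnsc (e \<and> d) (A (map parity_op (ys @ y # x # zs)))"
    using assms[unfolded symmetric_def, rule_format,
        of "map parity_op ys" "map parity_op zs" "parity_op x" e "parity_op y" d]
      parity_op_in_par[OF x] parity_op_in_par[OF y] len
    by simp
  ultimately show "op_br_vec A w (ys @ x # y # zs) = sgnsc (e \<and> d) (op_br_vec A w (ys @ y # x # zs))"
    unfolding op_br_vec_def by (simp add: lb_sgnsc_left sgnsc_add)
qed

lemma scale_of_nat_Suc_cancel:
  fixes n :: nat
  shows "scale (1 / of_nat (Suc n)) (scale (of_nat (Suc n)) v) = v"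
    and "scale (of_nat (Suc n)) (scale (1 / of_nat (Suc n)) v) = v"
proof -
  have "(of_nat (Suc n) :: 'k) \<noteq> 0" by (simp del: of_nat_Suc)
  then show "scale (1 / of_nat (Suc n)) (scale (of_nat (Suc n)) v) = v"
    and "scale (of_nat (Suc n)) (scale (1 / of_nat (Suc n)) v) = v"
    by simp_all
qed

lemma ebr_order0_right:
  "is_op p A \<Longrightarrow> ebr p 0 A B xs = (if length xs = p then op_br_vec A (B []) xs else 0)"
proof (induction p arbitrary: A B xs)
  case 0
  then show ?case
    using proj_False_add_proj_True[of "B []"]
    by (cases xs) (simp_all add: ebr_eq_0 op_br_vec_def lb_add_right[symmetric])
next
  case (Suc n)
  show ?case
  proof (cases "length xs = Suc n")
    case True
    then obtain x ys where xs: "xs = x # ys" and len: "length ys = n" by (cases xs) auto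
    define N :: 'k where "N = of_nat (Suc n)"
    define c where "c = B []"
    have IH: "ebr n 0 (\<lambda>zs. scale N (A (proj e x # zs))) (opcomp d B) ys =
        lb (scale N (A (proj e x # ys))) (proj False (proj d c))
      + lb (scale N (A (proj e x # map parity_op ys))) (proj True (proj d c))" for e d
      using Suc.IH[OF is_op_Cons_scale[OF Suc.prems], of N "proj e x" "opcomp d B" ys] len
      by (simp add: opcomp_Nil c_def op_br_vec_def)
    have split_x: "A (x # ys) = A (proj False x # ys) + A (proj True x # ys)"
      using is_op_add_head[OF Suc.prems, of "proj False x" "proj True x" ys]
      by (simp add: proj_False_add_proj_True)
    have split_parity_x: "A (parity_op x # zs) = A (proj False x # zs) - A (proj True x # zs)" for zs
      using is_op_add_head[OF Suc.prems, of "proj False x" "- proj True x" zs]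
      by (simp add: parity_op_def is_op_neg_head[OF Suc.prems])
    have "ebr (Suc n) 0 A B xs = scale (1 / N) (
          lb (scale N (A (proj False x # ys))) (proj False c)
        + lb (scale N (A (proj False x # map parity_op ys))) (proj True c)
        + lb (scale N (A (proj True x # ys))) (proj False c)
        - lb (scale N (A (proj True x # map parity_op ys))) (proj True c))"
      unfolding xs ebr.simps using len IH by (simp add: N_def)
    also have "\<dots> = scale (1 / N) (scale N (op_br_vec A c xs))"
      unfolding op_br_vec_def xs list.map split_x split_parity_x
      by (simp add: lb_scale_left lb_add_left lb_diff_left scale_right_distrib
          scale_right_diff_distrib algebra_simps del: scale_scale)
    also have "\<dots> = op_br_vec A c xs"
      unfolding N_def by (rule scale_of_nat_Suc_cancel(1))
    finally show ?thesis using True c_def by simp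
  qed (simp add: ebr_eq_0)
qed

lemma ebr_one_Cons:
  assumes A: "is_op p A" and len: "length ys = p"
  shows "ebr p 1 A one (x # ys) = scale (1 / of_nat (Suc p))
     (op_br_vec A x ys + (if p = 0 then 0 else scale (of_nat p) (ebr (p - 1) 1 (\<lambda>zs. A (x # zs)) one ys)))"
proof -
  have order0: "ebr p 0 A (\<lambda>zs. scale (of_nat 1) (one (x # zs))) ys = op_br_vec A x ys"
    using ebr_order0_right[OF A] len by simp
  have split_x: "ebr (p - Suc 0) (Suc 0) (\<lambda>zs. scale (of_nat p) (A (proj False x # zs))) one ys
      + ebr (p - Suc 0) (Suc 0) (\<lambda>zs. scale (of_nat p) (A (proj True x # zs))) one ys
      = ebr (p - Suc 0) (Suc 0) (\<lambda>zs. scale (of_nat p) (A (x # zs))) one ys"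
    by (rule ebr_add_left[symmetric])
      (simp add: is_op_add_head[OF A, symmetric] proj_False_add_proj_True scale_right_distrib[symmetric])
  have pull_scale: "ebr (p - Suc 0) (Suc 0) (\<lambda>zs. scale (of_nat p) (A (x # zs))) one ys =
      scale (of_nat p) (ebr (p - Suc 0) (Suc 0) (\<lambda>zs. A (x # zs)) one ys)"
    by (rule ebr_scale_left) simp
  show ?thesis
    unfolding ebr.simps using len order0
    by (simp add: ebr_zero_right opcomp_one split_x pull_scale)
qed

lemma ebr_one_Cons_Suc:
  assumes "is_op (Suc n) A" "length ys = Suc n"
  shows "ebr (Suc n) 1 A one (w # ys) = scale (1 / of_nat (Suc (Suc n)))
      (op_br_vec A w ys + scale (of_nat (Suc n)) (ebr n 1 (\<lambda>z. A (w # z)) one ys))"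
  using ebr_one_Cons[OF assms] by simp

lemma ebr_one_Cons_Cons:
  assumes A: "is_op (Suc n) A" and len: "length zs = n"
  shows "ebr (Suc n) 1 A one (u # v # zs) = scale (1 / of_nat (Suc (Suc n)))
      (op_br_vec A u (v # zs) + op_br_vec (\<lambda>w. A (u # w)) v zs
       + (if n = 0 then 0 else scale (of_nat n) (ebr (n - 1) 1 (\<lambda>w. A (u # v # w)) one zs)))"
proof -
  have "ebr (Suc n) 1 A one (u # v # zs) = scale (1 / of_nat (Suc (Suc n)))
      (op_br_vec A u (v # zs) + scale (of_nat (Suc n)) (ebr n 1 (\<lambda>w. A (u # w)) one (v # zs)))"
    using ebr_one_Cons[OF A, of "v # zs" u] len by simp
  also have "ebr n 1 (\<lambda>w. A (u # w)) one (v # zs) = scale (1 / of_nat (Suc n))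
      (op_br_vec (\<lambda>w. A (u # w)) v zs
       + (if n = 0 then 0 else scale (of_nat n) (ebr (n - 1) 1 (\<lambda>w. A (u # v # w)) one zs)))"
    using ebr_one_Cons[OF is_op_Cons[OF A] len] by simp
  finally show ?thesis by (simp only: scale_of_nat_Suc_cancel(2) add.assoc)
qed

lemma ebr_one_add_head:
  assumes A: "is_op p A" and len: "length zs = p"
  shows "ebr p 1 A one ((u + v) # zs) = ebr p 1 A one (u # zs) + ebr p 1 A one (v # zs)"
proof -
  have "ebr (p - 1) 1 (\<lambda>w. A ((u + v) # w)) one zs
      = ebr (p - 1) 1 (\<lambda>w. A (u # w)) one zs + ebr (p - 1) 1 (\<lambda>w. A (v # w)) one zs"
    by (rule ebr_add_left) (simp add: is_op_add_head[OF A])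
  then show ?thesis unfolding ebr_one_Cons[OF A len] op_br_vec_add
    by (simp add: scale_right_distrib algebra_simps)
qed

lemma ebr_one_scale_head:
  assumes A: "is_op p A" and len: "length zs = p"
  shows "ebr p 1 A one (scale c u # zs) = scale c (ebr p 1 A one (u # zs))"
proof -
  have "ebr (p - 1) 1 (\<lambda>w. A (scale c u # w)) one zs = scale c (ebr (p - 1) 1 (\<lambda>w. A (u # w)) one zs)"
    by (rule ebr_scale_left) (simp add: is_op_scale_head[OF A])
  then show ?thesis unfolding ebr_one_Cons[OF A len] op_br_vec_scale
    by (simp add: scale_right_distrib mult.commute)
qed

lemma ebr_one_add_arg:
  "is_op p A \<Longrightarrow> length ys + length zs + 1 = Suc p \<Longrightarrow>
    ebr p 1 A one (ys @ (u + v) # zs) = ebr p 1 A one (ys @ u # zs) + ebr p 1 A one (ys @ v # zs)"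
proof (induction p arbitrary: A ys)
  case (Suc n A ys)
  note A = Suc.prems(1)
  show ?case
  proof (cases ys)
    case (Cons w ys')
    have len: "length ys' + length zs + 1 = Suc n" using Suc.prems Cons by simp
    then have len_t: "length (ys' @ t # zs) = Suc n" for t by simp
    show ?thesis
      unfolding Cons append_Cons ebr_one_Cons_Suc[OF A len_t]
        Suc.IH[OF is_op_Cons[OF A] len] op_br_vec_add_arg[OF A len]
      by (simp add: scale_right_distrib algebra_simps)
  qed (use ebr_one_add_head[OF A] Suc.prems in simp)
qed (use ebr_one_add_head in simp)

lemma ebr_one_scale_arg:
  "is_op p A \<Longrightarrow> length ys + length zs + 1 = Suc p \<Longrightarrow>
    ebr p 1 A one (ys @ scale c u # zs) = scale c (ebr p 1 A one (ys @ u # zs))"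
proof (induction p arbitrary: A ys)
  case (Suc n A ys)
  note A = Suc.prems(1)
  show ?case
  proof (cases ys)
    case (Cons w ys')
    have len: "length ys' + length zs + 1 = Suc n" using Suc.prems Cons by simp
    then have len_t: "length (ys' @ t # zs) = Suc n" for t by simp
    show ?thesis
      unfolding Cons append_Cons ebr_one_Cons_Suc[OF A len_t]
        Suc.IH[OF is_op_Cons[OF A] len] op_br_vec_scale_arg[OF A len]
      by (simp add: scale_right_distrib mult.commute)
  qed (use ebr_one_scale_head[OF A] Suc.prems in simp)
qed (use ebr_one_scale_head in simp)

lemma is_op_ebr_one: "is_op p A \<Longrightarrow> is_op (Suc p) (ebr p 1 A one)"
  unfolding is_op_def[of "Suc p"] using ebr_one_add_arg ebr_one_scale_arg by (auto simp: ebr_eq_0)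

lemma ebr_one_swap_head:
  assumes A: "is_op (Suc n) A" and S: "symmetric (Suc n) A" and len: "length zs = n"
    and x: "x \<in> par e" and y: "y \<in> par d"
  shows "ebr (Suc n) 1 A one (x # y # zs) = sgnsc (e \<and> d) (ebr (Suc n) 1 A one (y # x # zs))"
proof -
  have "ebr (n - 1) 1 (\<lambda>w. A (x # y # w)) one zs = sgnsc (e \<and> d) (ebr (n - 1) 1 (\<lambda>w. A (y # x # w)) one zs)"
  proof (rule ebr_sgnsc_left)
    fix w
    show "A (x # y # w) = sgnsc (e \<and> d) (A (y # x # w))"
      using S[unfolded symmetric_def, rule_format, of "[]" w x e y d] x y
        is_op_eq_0[OF A, of "x # y # w"] is_op_eq_0[OF A, of "y # x # w"]
      by (cases "length w + 2 = Suc n") simp_all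
  qed
  then show ?thesis
    unfolding ebr_one_Cons_Cons[OF A len] op_br_vec_swap[OF A x y] by (simp add: sgnsc_add sgnsc_scale)
qed

lemma symmetric_ebr_one: "is_op p A \<Longrightarrow> symmetric p A \<Longrightarrow> symmetric (Suc p) (ebr p 1 A one)"
proof (induction p arbitrary: A)
  case 0
  then show ?case by (simp add: symmetric_def)
next
  case (Suc n)
  note A = Suc.prems(1) and S = Suc.prems(2)
  show ?case unfolding symmetric_def
  proof (intro allI impI)
    fix ys zs :: "'v list" and x y :: 'v and e d :: bool
    assume len: "length ys + length zs + 2 = Suc (Suc n)" and x: "x \<in> par e" and y: "y \<in> par d"
    show "ebr (Suc n) 1 A one (ys @ x # y # zs) = sgnsc (e \<and> d) (ebr (Suc n) 1 A one (ys @ y # x # zs))"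
    proof (cases ys)
      case Nil
      then show ?thesis using ebr_one_swap_head[OF A S _ x y] len by simp
    next
      case (Cons w ys')
      define L where "L = ys' @ x # y # zs"
      define L' where "L' = ys' @ y # x # zs"
      have len': "length ys' + length zs + 2 = Suc n" using len Cons by simp
      then have "length L = Suc n" "length L' = Suc n" by (auto simp: L_def L'_def)
      note recursion = ebr_one_Cons_Suc[OF A this(1), of w] ebr_one_Cons_Suc[OF A this(2), of w]
      have "symmetric (Suc n) (ebr n 1 (\<lambda>zs. A (w # zs)) one)"
        by (rule Suc.IH[OF is_op_Cons[OF A] symmetric_Cons[OF S]])
      then have IH: "ebr n 1 (\<lambda>zs. A (w # zs)) one L = sgnsc (e \<and> d) (ebr n 1 (\<lambda>zs. A (w # zs)) one L')"
        using x y len' unfolding symmetric_def L_def L'_def by blast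
      have "op_br_vec A w L = sgnsc (e \<and> d) (op_br_vec A w L')"
        using symmetric_op_br_vec[OF S] x y len' unfolding symmetric_def L_def L'_def by blast
      then show ?thesis
        unfolding Cons append_Cons L_def[symmetric] L'_def[symmetric] recursion IH
        by (simp add: sgnsc_add sgnsc_scale)
    qed
  qed
qed

section \<open>The span of symmetric operators\<close>

lemma comp_one: "comp m one = (if m = 1 then one else (\<lambda>_. 0))"
  by (auto simp: comp_def one_eq_0 fun_eq_iff)

lemma ubr_one:
  "ubr F one xs = (if xs = [] then 0 else ebr (length xs - 1) 1 (comp (length xs - 1) F) one xs)"
proof -
  let ?n = "length xs"
  let ?g = "\<lambda>p. ebr p (?n - p) (comp p F) (comp (?n - p) one) xs"
  have vanish: "?g p = 0" if "?n - p \<noteq> 1" for p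
    using that by (simp add: comp_one ebr_zero_right)
  show ?thesis
  proof (cases "xs = []")
    case True
    then show ?thesis unfolding ubr_def using vanish[of 0] by simp
  next
    case False
    then have n: "?n \<ge> 1" by (cases xs) auto
    have "ubr F one xs = ?g (?n - 1) + (\<Sum>p\<in>{..?n} - {?n - 1}. ?g p)"
      unfolding ubr_def by (rule sum.remove) auto
    also have "(\<Sum>p\<in>{..?n} - {?n - 1}. ?g p) = 0"
      using n by (intro sum.neutral ballI vanish) auto
    finally show ?thesis using n False by (simp add: comp_one)
  qed
qed

lemma ubr_one_of_op:
  assumes A: "is_op p A"
  shows "ubr A one = ebr p 1 A one"
proof
  fix xs :: "'v list"
  show "ubr A one xs = ebr p 1 A one xs"
  proof (cases "length xs = Suc p")
    case True
    moreover have "comp p A = A" using is_op_eq_0[OF A] by (auto simp: comp_def fun_eq_iff)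
    ultimately show ?thesis by (auto simp: ubr_one)
  next
    case False
    have "ebr (length xs - 1) 1 (comp (length xs - 1) A) one xs = 0" if "xs \<noteq> []"
      using False that by (intro ebr_zero_left) (auto simp: comp_def is_op_eq_0[OF A] neq_Nil_conv)
    then show ?thesis using False by (simp add: ubr_one ebr_eq_0)
  qed
qed

lemma Sspan_ubr_one: "F \<in> Sspan \<Longrightarrow> ubr F one \<in> Sspan"
proof (induction rule: Sspan.induct)
  case zero
  have "ubr (\<lambda>_. 0) one = (\<lambda>_. 0)"
    by (auto simp: fun_eq_iff ubr_one comp_def intro: ebr_zero_left)
  then show ?case using Sspan.zero by simp
next
  case (sym p A)
  then show ?case
    using Sspan.sym[OF is_op_ebr_one symmetric_ebr_one] ubr_one_of_op by simp
next
  case (add A B)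
  have "ubr (\<lambda>xs. A xs + B xs) one = (\<lambda>xs. ubr A one xs + ubr B one xs)"
    by (auto simp: fun_eq_iff ubr_one comp_def intro: ebr_add_left)
  then show ?case using Sspan.add[OF add(3,4)] by simp
next
  case (smult A c)
  have "ubr (\<lambda>xs. scale c (A xs)) one = (\<lambda>xs. scale c (ubr A one xs))"
    by (auto simp: fun_eq_iff ubr_one comp_def intro: ebr_scale_left)
  then show ?case using Sspan.smult[OF smult(2)] by simp
qed

lemma Sspan_iter_one: "A \<in> Sspan \<Longrightarrow> iter_one A k \<in> Sspan"
  by (induction k) (simp_all add: iter_one_def Sspan_ubr_one)

end

theorem proposition4p4:
  fixes scale :: "'k::field_char_0 \<Rightarrow> 'v::ab_group_add \<Rightarrow> 'v"
    and Ev Od :: "'v set" and lb :: "'v \<Rightarrow> 'v \<Rightarrow> 'v"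
    and A :: "'v list \<Rightarrow> 'v" and k :: nat
  assumes "lie_superalgebra scale Ev Od lb"
    and "A \<in> lie_superalgebra.Sspan scale Ev Od"
    and "k \<ge> 1"
  shows "lie_superalgebra.iter_one scale Ev Od lb A k \<in> lie_superalgebra.Sspan scale Ev Od"
proof -
  interpret lie_superalgebra scale Ev Od lb by fact
  show ?thesis using Sspan_iter_one[OF assms(2)] .
qed

end
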